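(* Let $\lambda_1,\lambda_2$, $\Omega$, $\varphi$, $f$ be as in the context, with $(c,\theta)\in\Omega$, and define $g:\mathbb{C}\to\mathbb{C}$ by $g(u+iv)=e^{f(u)+cv}e^{i\varphi(u)}$. Then $$g_{z\bar z}=\frac{2\left[\lambda_1^2(g+\bar g)-\lambda_2^2(g-\bar g)\right]}{\lambda_1^2(g+\bar g)^2-\lambda_2^2(g-\bar g)^2}\,g_zg_{\bar z},$$ and the Hopf differential of $g$ is $Q=\frac18e^{-i\theta}\,dz^2$.
   Context: Either $\lambda_1>\lambda_2>0$ or $\lambda_1=\lambda_2=1$. For $c>0$ put $\theta_c^+=\pi$ if $c>\sqrt2\lambda_1$ and $\theta_c^+=\arccos(1-c^2/\lambda_1^2)$ if $0<c\le\sqrt2\lambda_1$; $\Omega=\{(c,\theta): c>0,\ |\theta|<\theta_c^+\}$. For $(c,\theta)\in\Omega$: $D=\sin\theta/c$; $\varphi$ is the global solution of $\varphi'(u)=\sqrt{c^2+2\cos\theta\,B(u)-D^2B(u)^2}$, $\varphi(0)=0$, where $B(u)=\lambda_1^2\cos^2\varphi(u)+\lambda_2^2\sin^2\varphi(u)$; $f$ is the solution of $f'(u)=DB(u)$, $f(0)=0$. Here $z=u+iv$, $g_z=\frac12(g_u-ig_v)$, $g_{\bar z}=\frac12(g_u+ig_v)$, and the Hopf differential of $g$ is $Q=\frac{g_z\bar g_z}{\lambda_1^2(g+\bar g)^2-\lambda_2^2(g-\bar g)^2}dz^2$ with $\bar g_z=\partial_z(\bar g)$. *)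

theory Defs
  imports "HOL-Analysis.Analysis"
begin

definition theta_plus :: "real \<Rightarrow> real \<Rightarrow> real" where
  "theta_plus l1 c = (if c > sqrt 2 * l1 then pi else arccos (1 - c\<^sup>2 / l1\<^sup>2))"

definition Omega :: "real \<Rightarrow> (real \<times> real) set" where
  "Omega l1 = {(c, \<theta>). c > 0 \<and> \<bar>\<theta>\<bar> < theta_plus l1 c}"

definition Dconst :: "real \<Rightarrow> real \<Rightarrow> real" where
  "Dconst c \<theta> = sin \<theta> / c"

definition Bfun :: "real \<Rightarrow> real \<Rightarrow> (real \<Rightarrow> real) \<Rightarrow> real \<Rightarrow> real" where
  "Bfun l1 l2 \<phi> u = l1\<^sup>2 * (cos (\<phi> u))\<^sup>2 + l2\<^sup>2 * (sin (\<phi> u))\<^sup>2"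

definition pu :: "(complex \<Rightarrow> complex) \<Rightarrow> complex \<Rightarrow> complex" where
  "pu g z = vector_derivative (\<lambda>t::real. g (z + complex_of_real t)) (at 0)"

definition pv :: "(complex \<Rightarrow> complex) \<Rightarrow> complex \<Rightarrow> complex" where
  "pv g z = vector_derivative (\<lambda>t::real. g (z + \<i> * complex_of_real t)) (at 0)"

definition wz :: "(complex \<Rightarrow> complex) \<Rightarrow> complex \<Rightarrow> complex" where
  "wz g z = (pu g z - \<i> * pv g z) / 2"

definition wzb :: "(complex \<Rightarrow> complex) \<Rightarrow> complex \<Rightarrow> complex" where
  "wzb g z = (pu g z + \<i> * pv g z) / 2"

text \<open>Coefficient of dz^2 in the Hopf differential of g.\<close>
definition hopf :: "real \<Rightarrow> real \<Rightarrow> (complex \<Rightarrow> complex) \<Rightarrow> complex \<Rightarrow> complex" where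
  "hopf l1 l2 g z = wz g z * wz (\<lambda>w. cnj (g w)) z /
     ((complex_of_real l1)\<^sup>2 * (g z + cnj (g z))\<^sup>2 - (complex_of_real l2)\<^sup>2 * (g z - cnj (g z))\<^sup>2)"

end

theory Submission
  imports Defs
begin

text \<open>Write \<open>g = E(u) e^(c v)\<close> with \<open>E = exp (f + \<i> \<phi>)\<close> and \<open>a = f' + \<i> \<phi>'\<close>. Then
  \<open>g_z = g (a - \<i> c) / 2\<close>, \<open>g_zbar = g (a + \<i> c) / 2\<close> and \<open>g_zzbar = g (a\<^sup>2 + c\<^sup>2 + a') / 4\<close>.
  Differentiating the equation for \<open>\<phi>'\<close> (legitimate because on \<open>\<Omega>\<close> its radicand stays
  positive) gives the Riccati equation \<open>a' = \<i> (k / B) (a\<^sup>2 + c\<^sup>2)\<close> with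
  \<open>k = (\<lambda>1\<^sup>2 - \<lambda>2\<^sup>2) cos \<phi> sin \<phi>\<close>. Writing \<open>g = r e^(\<i> \<phi>)\<close>, the coefficient of \<open>g_z g_zbar\<close>
  in the claimed equation is \<open>(B + \<i> k) / (B g)\<close>, which gives the first identity. For the Hopf
  differential, \<open>(a - \<i> c) (conj a - \<i> c) = 2 B e^(-\<i> \<theta>)\<close> by the equation for \<open>\<phi>'\<close> and
  \<open>D c = sin \<theta>\<close>, while \<open>|g|\<^sup>2\<close> cancels against the denominator \<open>4 r\<^sup>2 B\<close>.\<close>

lemma pu_separable:
  fixes A V :: "real \<Rightarrow> complex"
  assumes "(A has_vector_derivative A') (at (Re z))"
  shows "pu (\<lambda>z. A (Re z) * V (Im z)) z = A' * V (Im z)"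
proof -
  have "((\<lambda>t. A (Re z + t)) has_vector_derivative A') (at 0)"
  proof -
    have "((\<lambda>t. Re z + t) has_vector_derivative 1) (at 0)"
      by (auto intro!: derivative_eq_intros)
    from vector_diff_chain_at[OF this] assms show ?thesis
      by (simp add: o_def)
  qed
  then have "((\<lambda>t. A (Re z + t) * V (Im z)) has_vector_derivative A' * V (Im z)) (at 0)"
    by (rule has_vector_derivative_mult_left)
  then show ?thesis
    unfolding pu_def by (intro vector_derivative_at) simp
qed

lemma pv_separable:
  fixes A V :: "real \<Rightarrow> complex"
  assumes "(V has_vector_derivative V') (at (Im z))"
  shows "pv (\<lambda>z. A (Re z) * V (Im z)) z = A (Re z) * V'"
proof -
  have "((\<lambda>t. V (Im z + t)) has_vector_derivative V') (at 0)"
  proof -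
    have "((\<lambda>t. Im z + t) has_vector_derivative 1) (at 0)"
      by (auto intro!: derivative_eq_intros)
    from vector_diff_chain_at[OF this] assms show ?thesis
      by (simp add: o_def)
  qed
  then have "((\<lambda>t. A (Re z) * V (Im z + t)) has_vector_derivative A (Re z) * V') (at 0)"
    by (rule has_vector_derivative_mult_right)
  then show ?thesis
    unfolding pv_def by (intro vector_derivative_at) simp
qed

lemma wirtinger_separable_exp:
  fixes A :: "real \<Rightarrow> complex" and c :: real
  assumes "(A has_vector_derivative A') (at (Re z))"
  defines "h \<equiv> \<lambda>z. A (Re z) * of_real (exp (c * Im z))"
  shows "wz h z = (A' - \<i> * of_real c * A (Re z)) * of_real (exp (c * Im z)) / 2"
    and "wzb h z = (A' + \<i> * of_real c * A (Re z)) * of_real (exp (c * Im z)) / 2"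
proof -
  have "((\<lambda>v. of_real (exp (c * v))) has_vector_derivative
      (of_real (c * exp (c * Im z)) :: complex)) (at (Im z))"
    by (intro has_vector_derivative_of_real) (auto intro!: derivative_eq_intros)
  then have "pv h z = A (Re z) * of_real (c * exp (c * Im z))"
    unfolding h_def by (rule pv_separable)
  moreover have "pu h z = A' * of_real (exp (c * Im z))"
    unfolding h_def using assms(1) by (rule pu_separable)
  ultimately show "wz h z = (A' - \<i> * of_real c * A (Re z)) * of_real (exp (c * Im z)) / 2"
    and "wzb h z = (A' + \<i> * of_real c * A (Re z)) * of_real (exp (c * Im z)) / 2"
    unfolding wz_def wzb_def by (simp_all add: algebra_simps)
qed

lemma cnj_sum_diff_square:
  "(complex_of_real l1)\<^sup>2 * (w + cnj w)\<^sup>2 - (complex_of_real l2)\<^sup>2 * (w - cnj w)\<^sup>2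
     = 4 * of_real (l1\<^sup>2 * (Re w)\<^sup>2 + l2\<^sup>2 * (Im w)\<^sup>2)"
  by (simp add: complex_add_cnj complex_diff_cnj power_mult_distrib algebra_simps)

lemma cnj_sum_diff_mult:
  "2 * ((complex_of_real l1)\<^sup>2 * (w + cnj w) - (complex_of_real l2)\<^sup>2 * (w - cnj w)) * w
     = 4 * (of_real (l1\<^sup>2 * (Re w)\<^sup>2 + l2\<^sup>2 * (Im w)\<^sup>2) + \<i> * of_real ((l1\<^sup>2 - l2\<^sup>2) * Re w * Im w))"
  by (subst (3) complex_eq[of w]) (simp add: complex_add_cnj complex_diff_cnj power2_eq_square algebra_simps)

lemma Omega_cos_bound:
  assumes "l1 > 0" and "(c, \<theta>) \<in> Omega l1"
  shows "l1\<^sup>2 * (1 - cos \<theta>) < c\<^sup>2"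
proof -
  have c: "c > 0" and th: "\<bar>\<theta>\<bar> < theta_plus l1 c"
    using assms(2) by (auto simp: Omega_def)
  show ?thesis
  proof (cases "c > sqrt 2 * l1")
    case True
    then have "2 * l1\<^sup>2 < c\<^sup>2"
      using power_strict_mono[OF True, of 2] assms(1) by (simp add: power_mult_distrib)
    moreover have "1 - cos \<theta> \<le> 2"
      using cos_ge_minus_one[of \<theta>] by simp
    ultimately show ?thesis
      using mult_left_mono[of "1 - cos \<theta>" 2 "l1\<^sup>2"] by simp
  next
    case False
    define x where "x = 1 - c\<^sup>2 / l1\<^sup>2"
    have "c\<^sup>2 \<le> 2 * l1\<^sup>2"
      using power_mono[of c "sqrt 2 * l1" 2] False c by (simp add: power_mult_distrib)
    then have x: "-1 \<le> x" "x \<le> 1"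
      using assms(1) by (simp_all add: x_def field_simps)
    have "\<bar>\<theta>\<bar> < arccos x"
      using th False by (simp add: theta_plus_def x_def)
    then have "cos (arccos x) < cos \<bar>\<theta>\<bar>"
      using arccos_lbound[OF x] arccos_ubound[OF x] by (subst cos_mono_less_eq) auto
    then have "x < cos \<theta>"
      using x by simp
    then show ?thesis
      using assms(1) by (simp add: x_def field_simps)
  qed
qed

lemma radicand_pos:
  assumes "l1 > 0" and "(c, \<theta>) \<in> Omega l1" and "0 < B" and "B \<le> l1\<^sup>2"
  shows "c\<^sup>2 + 2 * cos \<theta> * B - (Dconst c \<theta>)\<^sup>2 * B\<^sup>2 > 0"
proof -
  have c: "c > 0"
    using assms(2) by (simp add: Omega_def)
  have "B * (1 - cos \<theta>) \<le> l1\<^sup>2 * (1 - cos \<theta>)"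
    using assms(4) cos_le_one[of \<theta>] by (intro mult_right_mono) auto
  with Omega_cos_bound[OF assms(1,2)] have minus: "c\<^sup>2 + cos \<theta> * B - B > 0"
    by (simp add: algebra_simps)
  have "0 \<le> (1 + cos \<theta>) * B"
    using assms(3) cos_ge_minus_one[of \<theta>] by (intro mult_nonneg_nonneg) linarith+
  moreover have "0 < c\<^sup>2"
    using c by simp
  ultimately have plus: "c\<^sup>2 + cos \<theta> * B + B > 0"
    unfolding distrib_right by linarith
  have factor: "c\<^sup>2 * (c\<^sup>2 + 2 * cos \<theta> * B - (Dconst c \<theta>)\<^sup>2 * B\<^sup>2)
      = (c\<^sup>2 + cos \<theta> * B - B) * (c\<^sup>2 + cos \<theta> * B + B)"
  proof -
    have "c\<^sup>2 * (Dconst c \<theta>)\<^sup>2 = 1 - (cos \<theta>)\<^sup>2"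
      using c by (simp add: Dconst_def power_divide sin_squared_eq)
    have "c\<^sup>2 * (c\<^sup>2 + 2 * cos \<theta> * B - (Dconst c \<theta>)\<^sup>2 * B\<^sup>2)
        = c\<^sup>2 * c\<^sup>2 + 2 * c\<^sup>2 * cos \<theta> * B - (c\<^sup>2 * (Dconst c \<theta>)\<^sup>2) * B\<^sup>2"
      by (simp add: algebra_simps)
    also have "\<dots> = (c\<^sup>2 + cos \<theta> * B - B) * (c\<^sup>2 + cos \<theta> * B + B)"
      unfolding \<open>c\<^sup>2 * (Dconst c \<theta>)\<^sup>2 = 1 - (cos \<theta>)\<^sup>2\<close>
      by (simp add: algebra_simps power2_eq_square)
    finally show ?thesis .
  qed
  have "0 < c\<^sup>2 * (c\<^sup>2 + 2 * cos \<theta> * B - (Dconst c \<theta>)\<^sup>2 * B\<^sup>2)"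
    unfolding factor using minus plus by simp
  then show ?thesis
    by (simp add: zero_less_mult_iff)
qed

locale profile_curve =
  fixes l1 l2 c \<theta> :: real and \<phi> f :: "real \<Rightarrow> real"
  assumes l2_pos: "0 < l2" and l2_le_l1: "l2 \<le> l1"
    and in_Omega: "(c, \<theta>) \<in> Omega l1"
    and phi_deriv: "\<And>u. (\<phi> has_real_derivative
        sqrt (c\<^sup>2 + 2 * cos \<theta> * Bfun l1 l2 \<phi> u - (Dconst c \<theta>)\<^sup>2 * (Bfun l1 l2 \<phi> u)\<^sup>2)) (at u)"
    and f_deriv: "\<And>u. (f has_real_derivative Dconst c \<theta> * Bfun l1 l2 \<phi> u) (at u)"
begin

abbreviation "B \<equiv> Bfun l1 l2 \<phi>"
abbreviation "D \<equiv> Dconst c \<theta>"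

definition "dphi u = sqrt (c\<^sup>2 + 2 * cos \<theta> * B u - D\<^sup>2 * (B u)\<^sup>2)"
definition "k u = (l1\<^sup>2 - l2\<^sup>2) * cos (\<phi> u) * sin (\<phi> u)"
definition "a u = complex_of_real (D * B u) + \<i> * complex_of_real (dphi u)"
definition "E u = exp (complex_of_real (f u) + \<i> * complex_of_real (\<phi> u))"
definition "G z = E (Re z) * complex_of_real (exp (c * Im z))"

lemma c_pos: "0 < c"
  using in_Omega by (simp add: Omega_def)

lemma B_pos: "0 < B u" and B_le: "B u \<le> l1\<^sup>2"
proof -
  have "l2\<^sup>2 \<le> l1\<^sup>2"
    using l2_pos l2_le_l1 by (intro power_mono) auto
  then have "l2\<^sup>2 * ((cos (\<phi> u))\<^sup>2 + (sin (\<phi> u))\<^sup>2) \<le> B u"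
    and "B u \<le> l1\<^sup>2 * ((cos (\<phi> u))\<^sup>2 + (sin (\<phi> u))\<^sup>2)"
    unfolding Bfun_def distrib_left by (auto intro: mult_right_mono)
  then have "l2\<^sup>2 \<le> B u" and "B u \<le> l1\<^sup>2"
    by simp_all
  moreover have "0 < l2\<^sup>2"
    using l2_pos by simp
  ultimately show "0 < B u" and "B u \<le> l1\<^sup>2"
    by linarith+
qed

lemma radicand_B_pos: "0 < c\<^sup>2 + 2 * cos \<theta> * B u - D\<^sup>2 * (B u)\<^sup>2"
  using radicand_pos[OF _ in_Omega B_pos B_le] l2_pos l2_le_l1 by simp

lemma dphi_pos: "0 < dphi u"
  using radicand_B_pos by (simp add: dphi_def)

lemma dphi_sq: "(dphi u)\<^sup>2 = c\<^sup>2 + 2 * cos \<theta> * B u - D\<^sup>2 * (B u)\<^sup>2"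
  using radicand_B_pos[of u] by (simp add: dphi_def)

lemma B_deriv: "(B has_real_derivative - 2 * k u * dphi u) (at u)"
proof -
  have "((\<lambda>u. l1\<^sup>2 * (cos (\<phi> u))\<^sup>2 + l2\<^sup>2 * (sin (\<phi> u))\<^sup>2) has_real_derivative - 2 * k u * dphi u) (at u)"
    using phi_deriv[of u] unfolding k_def dphi_def
    by (auto intro!: derivative_eq_intros simp: algebra_simps power2_eq_square)
  then show ?thesis
    by (simp add: Bfun_def[abs_def])
qed

lemma dphi_deriv: "(dphi has_real_derivative 2 * k u * (D\<^sup>2 * B u - cos \<theta>)) (at u)"
proof -
  have "((\<lambda>u. c\<^sup>2 + 2 * cos \<theta> * B u - D\<^sup>2 * (B u)\<^sup>2) has_real_derivative
      (2 * cos \<theta> - 2 * D\<^sup>2 * B u) * (- 2 * k u * dphi u)) (at u)"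
    by (auto intro!: derivative_eq_intros B_deriv simp: algebra_simps)
  from DERIV_chain2[OF DERIV_real_sqrt[OF radicand_B_pos] this]
  have "(dphi has_real_derivative inverse (dphi u) / 2 * ((2 * cos \<theta> - 2 * D\<^sup>2 * B u) * (- 2 * k u * dphi u))) (at u)"
    by (simp add: dphi_def[abs_def])
  moreover have "inverse (dphi u) / 2 * ((2 * cos \<theta> - 2 * D\<^sup>2 * B u) * (- 2 * k u * dphi u))
      = 2 * k u * (D\<^sup>2 * B u - cos \<theta>)"
    using dphi_pos[of u] by (simp add: field_simps)
  ultimately show ?thesis
    by simp
qed

lemma a_sq_plus_c_sq:
  "(a u)\<^sup>2 + (complex_of_real c)\<^sup>2
     = 2 * of_real (B u) * (of_real (D\<^sup>2 * B u - cos \<theta>) + \<i> * of_real (D * dphi u))"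
proof -
  have "(a u)\<^sup>2 + (complex_of_real c)\<^sup>2
      = of_real ((D * B u)\<^sup>2 - (dphi u)\<^sup>2 + c\<^sup>2) + \<i> * of_real (2 * D * B u * dphi u)"
    by (simp add: a_def power2_eq_square algebra_simps)
  also have "\<dots> = 2 * of_real (B u) * (of_real (D\<^sup>2 * B u - cos \<theta>) + \<i> * of_real (D * dphi u))"
    unfolding dphi_sq by (simp add: power2_eq_square algebra_simps)
  finally show ?thesis .
qed

lemma a_deriv:
  "(a has_vector_derivative \<i> * of_real (k u / B u) * ((a u)\<^sup>2 + (complex_of_real c)\<^sup>2)) (at u)"
proof -
  have "(a has_vector_derivative
      of_real (D * (- 2 * k u * dphi u)) + \<i> * of_real (2 * k u * (D\<^sup>2 * B u - cos \<theta>))) (at u)"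
    unfolding a_def[abs_def]
    by (intro has_vector_derivative_add has_vector_derivative_mult_right
        has_vector_derivative_of_real DERIV_cmult B_deriv dphi_deriv)
  moreover have "of_real (D * (- 2 * k u * dphi u)) + \<i> * of_real (2 * k u * (D\<^sup>2 * B u - cos \<theta>))
      = \<i> * of_real (k u / B u) * ((a u)\<^sup>2 + (complex_of_real c)\<^sup>2)"
    unfolding a_sq_plus_c_sq using B_pos[of u]
    by (simp add: field_simps power2_eq_square)
  ultimately show ?thesis
    by simp
qed

lemma E_deriv: "(E has_vector_derivative E u * a u) (at u)"
proof -
  have "((\<lambda>u. complex_of_real (f u) + \<i> * complex_of_real (\<phi> u)) has_vector_derivative a u) (at u)"
    unfolding a_def dphi_def
    by (intro has_vector_derivative_add has_vector_derivative_mult_right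
        has_vector_derivative_of_real f_deriv phi_deriv)
  from field_vector_diff_chain_at[OF this DERIV_exp] show ?thesis
    by (simp add: E_def[abs_def] o_def mult.commute)
qed

lemma G_polar: "G z = of_real (exp (f (Re z) + c * Im z)) * cis (\<phi> (Re z))"
  by (simp add: G_def E_def exp_add cis_conv_exp exp_of_real[symmetric] algebra_simps)

lemma G_quadratic_forms:
  fixes z :: complex
  defines "r \<equiv> exp (f (Re z) + c * Im z)"
  shows "l1\<^sup>2 * (Re (G z))\<^sup>2 + l2\<^sup>2 * (Im (G z))\<^sup>2 = r\<^sup>2 * B (Re z)"
    and "(l1\<^sup>2 - l2\<^sup>2) * Re (G z) * Im (G z) = r\<^sup>2 * k (Re z)"
  by (simp_all add: G_polar r_def Bfun_def k_def power2_eq_square algebra_simps)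

lemma G_mult_cnj: "G z * cnj (G z) = of_real ((exp (f (Re z) + c * Im z))\<^sup>2)"
  unfolding complex_mult_cnj by (simp add: G_polar power_mult_distrib flip: distrib_left)

lemma wz_G: "wz G z = G z * (a (Re z) - \<i> * of_real c) / 2"
  and wzb_G: "wzb G z = G z * (a (Re z) + \<i> * of_real c) / 2"
  using wirtinger_separable_exp[OF E_deriv, where c = c]
  by (simp_all add: G_def[abs_def] algebra_simps)

lemma wz_cnj_G: "wz (\<lambda>w. cnj (G w)) z = cnj (G z) * (cnj (a (Re z)) - \<i> * of_real c) / 2"
  using wirtinger_separable_exp[OF has_vector_derivative_cnj[OF E_deriv], where c = c]
  by (simp add: G_def[abs_def] algebra_simps)

lemma wz_wzb_G:
  "wz (wzb G) z = G z * ((a (Re z))\<^sup>2 + (complex_of_real c)\<^sup>2)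
     * (1 + \<i> * of_real (k (Re z) / B (Re z))) / 4"
proof -
  define A where "A u = E u * (a u + \<i> * of_real c) / 2" for u
  define A' where "A' u = (E u * a u * (a u + \<i> * of_real c)
    + E u * (\<i> * of_real (k u / B u) * ((a u)\<^sup>2 + (complex_of_real c)\<^sup>2))) / 2" for u
  have wzb_G_sep: "wzb G = (\<lambda>z. A (Re z) * of_real (exp (c * Im z)))"
    by (simp add: wzb_G A_def G_def fun_eq_iff algebra_simps)
  have "(A has_vector_derivative A' u) (at u)" for u
    unfolding A_def[abs_def] A'_def
    by (auto intro!: derivative_eq_intros E_deriv a_deriv simp: algebra_simps)
  then have "wz (wzb G) z = (A' (Re z) - \<i> * of_real c * A (Re z)) * of_real (exp (c * Im z)) / 2"
    unfolding wzb_G_sep by (rule wirtinger_separable_exp(1))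
  also have "\<dots> = G z * ((a (Re z))\<^sup>2 + (complex_of_real c)\<^sup>2)
     * (1 + \<i> * of_real (k (Re z) / B (Re z))) / 4"
    using B_pos[of "Re z"] by (simp add: A_def A'_def G_def field_simps power2_eq_square)
  finally show ?thesis .
qed

lemma a_minus_ic_mult_cnj:
  "(a u - \<i> * of_real c) * (cnj (a u) - \<i> * of_real c) = 2 * of_real (B u) * exp (- \<i> * of_real \<theta>)"
proof -
  have "(a u - \<i> * of_real c) * (cnj (a u) - \<i> * of_real c)
      = of_real ((D * B u)\<^sup>2 + (dphi u)\<^sup>2 - c\<^sup>2) - \<i> * of_real (2 * B u * (D * c))"
    by (simp add: a_def power2_eq_square algebra_simps)
  also have "\<dots> = 2 * of_real (B u) * (of_real (cos \<theta>) - \<i> * of_real (sin \<theta>))"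
    unfolding dphi_sq using c_pos by (simp add: Dconst_def power2_eq_square algebra_simps)
  finally show ?thesis
    by (simp add: exp_minus_Euler cos_of_real sin_of_real)
qed

lemma G_denominator:
  "(complex_of_real l1)\<^sup>2 * (G z + cnj (G z))\<^sup>2 - (complex_of_real l2)\<^sup>2 * (G z - cnj (G z))\<^sup>2
     = 4 * of_real ((exp (f (Re z) + c * Im z))\<^sup>2 * B (Re z))"
  by (simp add: cnj_sum_diff_square G_quadratic_forms)

lemma harmonic_map_equation_G:
  "wz (wzb G) z =
     2 * ((complex_of_real l1)\<^sup>2 * (G z + cnj (G z)) - (complex_of_real l2)\<^sup>2 * (G z - cnj (G z)))
     / ((complex_of_real l1)\<^sup>2 * (G z + cnj (G z))\<^sup>2 - (complex_of_real l2)\<^sup>2 * (G z - cnj (G z))\<^sup>2)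
     * wz G z * wzb G z"
proof -
  define r where "r = exp (f (Re z) + c * Im z)"
  define N where "N = 2 * ((complex_of_real l1)\<^sup>2 * (G z + cnj (G z)) - (complex_of_real l2)\<^sup>2 * (G z - cnj (G z)))"
  have N: "N * G z = 4 * (of_real (r\<^sup>2 * B (Re z)) + \<i> * of_real (r\<^sup>2 * k (Re z)))"
    unfolding N_def cnj_sum_diff_mult G_quadratic_forms r_def ..
  have pos: "0 < r" "0 < B (Re z)"
    using B_pos by (auto simp: r_def)
  have prod: "wz G z * wzb G z = G z * G z * ((a (Re z))\<^sup>2 + (complex_of_real c)\<^sup>2) / 4"
    by (simp add: wz_G wzb_G field_simps power2_eq_square)
  have "N / (4 * of_real (r\<^sup>2 * B (Re z))) * wz G z * wzb G z
      = N / (4 * of_real (r\<^sup>2 * B (Re z))) * (G z * G z * ((a (Re z))\<^sup>2 + (complex_of_real c)\<^sup>2) / 4)"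
    by (simp only: mult.assoc prod)
  also have "\<dots> = (N * G z) / (4 * of_real (r\<^sup>2 * B (Re z))) * G z * ((a (Re z))\<^sup>2 + (complex_of_real c)\<^sup>2) / 4"
    by (simp add: ac_simps)
  also have "\<dots> = wz (wzb G) z"
    unfolding N wz_wzb_G using pos by (simp add: field_simps power2_eq_square)
  finally show ?thesis
    by (simp add: G_denominator N_def r_def)
qed

lemma hopf_G: "hopf l1 l2 G z = exp (- \<i> * of_real \<theta>) / 8"
proof -
  have "hopf l1 l2 G z = G z * cnj (G z) * ((a (Re z) - \<i> * of_real c) * (cnj (a (Re z)) - \<i> * of_real c))
      / (16 * of_real ((exp (f (Re z) + c * Im z))\<^sup>2 * B (Re z)))"
    by (simp add: hopf_def G_denominator wz_G wz_cnj_G)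
  also have "\<dots> = exp (- \<i> * of_real \<theta>) / 8"
    unfolding G_mult_cnj a_minus_ic_mult_cnj using B_pos[of "Re z"] by (simp add: field_simps)
  finally show ?thesis .
qed

end

theorem proposition5p3:
  fixes l1 l2 c \<theta> :: real and \<phi> f :: "real \<Rightarrow> real" and g :: "complex \<Rightarrow> complex"
  assumes lam: "(l1 > l2 \<and> l2 > 0) \<or> (l1 = 1 \<and> l2 = 1)"
    and Om: "(c, \<theta>) \<in> Omega l1"
    and phi0: "\<phi> 0 = 0"
    and phi': "\<And>u. (\<phi> has_real_derivative
        sqrt (c\<^sup>2 + 2 * cos \<theta> * Bfun l1 l2 \<phi> u - (Dconst c \<theta>)\<^sup>2 * (Bfun l1 l2 \<phi> u)\<^sup>2)) (at u)"
    and f0: "f 0 = 0"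
    and f': "\<And>u. (f has_real_derivative Dconst c \<theta> * Bfun l1 l2 \<phi> u) (at u)"
    and g: "\<And>z. g z = exp (complex_of_real (f (Re z) + c * Im z)) * exp (\<i> * complex_of_real (\<phi> (Re z)))"
  shows "\<forall>z. wz (wzb g) z =
           2 * ((complex_of_real l1)\<^sup>2 * (g z + cnj (g z)) - (complex_of_real l2)\<^sup>2 * (g z - cnj (g z)))
           / ((complex_of_real l1)\<^sup>2 * (g z + cnj (g z))\<^sup>2 - (complex_of_real l2)\<^sup>2 * (g z - cnj (g z))\<^sup>2)
           * wz g z * wzb g z
         \<and> hopf l1 l2 g z = exp (- \<i> * complex_of_real \<theta>) / 8"
proof -
  have "0 < l2" and "l2 \<le> l1"
    using lam by auto
  then interpret profile_curve l1 l2 c \<theta> \<phi> f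
    using Om phi' f' by unfold_locales
  have "g = G"
    by (simp add: fun_eq_iff g G_polar cis_conv_exp flip: exp_of_real)
  then show ?thesis
    using harmonic_map_equation_G hopf_G by simp
qed

end
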